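(* Let $p$ be a prime, $n\ge2$, and $G$ an abstract group; regard $\mathbb{F}_p$ as a trivial $\hat{G}$-module. Then $\hat{G}$ satisfies the $n$-fold vanishing Massey product property if and only if for every (abstract) homomorphism $\varphi:G\to\overline{U_{n+1}(\mathbb{F}_p)}$ there exists an (abstract) homomorphism $\psi:G\to U_{n+1}(\mathbb{F}_p)$ such that $[\psi(g)]_{i,i+1}=[\varphi(g)]_{i,i+1}$ for every $g\in G$ and $1\le i\le n$.
   Context: $\hat{G}$ is the profinite completion of $G$: a profinite group with a homomorphism $i:G\to\hat{G}$ such that every homomorphism from $G$ to a profinite group factors uniquely through a continuous homomorphism from $\hat{G}$; $i(G)$ is dense in $\hat{G}$. $U_{n+1}(\mathbb{F}_p)$ is the group of upper unitriangular $(n+1)\times(n+1)$ matrices over $\mathbb{F}_p$; $\overline{U_{n+1}(\mathbb{F}_p)}$ is its quotient by the central subgroup of matrices supported (off the diagonal) only in the $(1,n+1)$ entry; $[\cdot]_{i,i+1}$ denotes the $(i,i+1)$ entry. A profinite group $H$ acting trivially on $\mathbb{F}_p$ satisfies the $n$-fold vanishing Massey product property if for every continuous homomorphism $\varphi:H\to\overline{U_{n+1}(\mathbb{F}_p)}$ there is a continuous homomorphism $\psi:H\to U_{n+1}(\mathbb{F}_p)$ with $[\psi(h)]_{i,i+1}=[\varphi(h)]_{i,i+1}$ for all $h\in H$, $1\le i\le n$. *)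

theory Defs
  imports "HOL-Analysis.Analysis" "HOL-Algebra.Algebra"
begin

definition fin_normal :: "('a, 'b) monoid_scheme \<Rightarrow> 'a set set" where
  "fin_normal G = {N. N \<lhd> G \<and> finite (rcosets\<^bsub>G\<^esub> N)}"

text \<open>The profinite completion, realised as the inverse limit of the finite quotients
  G/N (N normal of finite index): compatible families of cosets, with componentwise
  multiplication.\<close>
definition prof_compl :: "('a, 'b) monoid_scheme \<Rightarrow> ('a set \<Rightarrow> 'a set) monoid" where
  "prof_compl G =
    \<lparr> carrier = {x \<in> extensional (fin_normal G).
                   (\<forall>N\<in>fin_normal G. x N \<in> rcosets\<^bsub>G\<^esub> N) \<and>
                   (\<forall>N\<in>fin_normal G. \<forall>M\<in>fin_normal G. N \<subseteq> M \<longrightarrow> x N \<subseteq> x M)},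
      mult = (\<lambda>x y. \<lambda>N\<in>fin_normal G. x N <#>\<^bsub>G\<^esub> y N),
      one = (\<lambda>N\<in>fin_normal G. N) \<rparr>"

definition prof_top :: "('a, 'b) monoid_scheme \<Rightarrow> ('a set \<Rightarrow> 'a set) topology" where
  "prof_top G = subtopology
      (product_topology (\<lambda>N. discrete_topology (rcosets\<^bsub>G\<^esub> N)) (fin_normal G))
      (carrier (prof_compl G))"

text \<open>(n+1)x(n+1) upper unitriangular matrices over F_p, indices 1..n+1, entries
  represented by residues 0..p-1; entries outside the index range are 0.\<close>
definition unitri_grp :: "nat \<Rightarrow> nat \<Rightarrow> (nat \<Rightarrow> nat \<Rightarrow> nat) monoid" where
  "unitri_grp p n =
    \<lparr> carrier = {A. (\<forall>i j. A i j < p) \<and>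
                   (\<forall>i j. i \<notin> {1..n+1} \<or> j \<notin> {1..n+1} \<longrightarrow> A i j = 0) \<and>
                   (\<forall>i\<in>{1..n+1}. A i i = 1) \<and>
                   (\<forall>i j. j < i \<longrightarrow> A i j = 0)},
      mult = (\<lambda>A B i j. if i \<in> {1..n+1} \<and> j \<in> {1..n+1}
                         then (\<Sum>k\<in>{1..n+1}. A i k * B k j) mod p else 0),
      one = (\<lambda>i j. if i \<in> {1..n+1} \<and> i = j then 1 else 0) \<rparr>"

definition corner_sub :: "nat \<Rightarrow> nat \<Rightarrow> (nat \<Rightarrow> nat \<Rightarrow> nat) set" where
  "corner_sub p n = {A \<in> carrier (unitri_grp p n).
      \<forall>i j. i < j \<and> (i, j) \<noteq> (1, n+1) \<longrightarrow> A i j = 0}"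

definition ubar_grp :: "nat \<Rightarrow> nat \<Rightarrow> (nat \<Rightarrow> nat \<Rightarrow> nat) set monoid" where
  "ubar_grp p n = unitri_grp p n Mod corner_sub p n"

text \<open>For a topological group (H with topology T on its carrier) acting trivially on F_p.
  Finite groups carry the discrete topology. The (i,i+1)-entry of an element of the
  quotient is the (well defined, for n >= 2) (i,i+1)-entry of any representative.\<close>
definition massey_vanishing ::
    "nat \<Rightarrow> nat \<Rightarrow> ('h, 'c) monoid_scheme \<Rightarrow> 'h topology \<Rightarrow> bool" where
  "massey_vanishing p n H T \<longleftrightarrow>
     (\<forall>\<phi>\<in>hom H (ubar_grp p n).
        continuous_map T (discrete_topology (carrier (ubar_grp p n))) \<phi> \<longrightarrow>
        (\<exists>\<psi>\<in>hom H (unitri_grp p n).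
           continuous_map T (discrete_topology (carrier (unitri_grp p n))) \<psi> \<and>
           (\<forall>h\<in>carrier H. \<forall>i\<in>{1..n}. \<forall>A\<in>\<phi> h. \<psi> h i (Suc i) = A i (Suc i))))"

end

theory Submission
  imports Defs
begin

text \<open>A homomorphism from G to a finite structure F is constant on the cosets of a normal
  subgroup K of finite index, so it extends, through the projection of the completion onto G/K,
  to a continuous homomorphism on the completion; conversely a continuous homomorphism on the
  completion restricts along i: G \<rightarrow> completion. A continuous map from the completion to a discrete
  space is locally constant, and the image of G is dense, so any two such maps take their values
  at a point x simultaneously at some point i(g). Hence a lifting problem between finite targets
  is solvable over the completion by continuous homomorphisms iff it is solvable over G by
  abstract ones; Massey vanishing is such a problem, for the finite groups U and its quotient.\<close>

context group
begin

lemma finite_rcosets_by_separating_map: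
  assumes H: "subgroup H G" and S: "finite S" and chi: "chi \<in> carrier G \<rightarrow> S"
    and sep: "\<And>g g'. g \<in> carrier G \<Longrightarrow> g' \<in> carrier G \<Longrightarrow> chi g = chi g' \<Longrightarrow> g \<otimes> inv g' \<in> H"
  shows "finite (rcosets H)"
proof -
  define rep where "rep s = (SOME g. g \<in> carrier G \<and> chi g = s)" for s
  have "rcosets H \<subseteq> (\<lambda>s. H #> rep s) ` S"
  proof
    fix C assume "C \<in> rcosets H"
    then obtain g where g: "g \<in> carrier G" "C = H #> g" unfolding RCOSETS_def by auto
    have r: "rep (chi g) \<in> carrier G" "chi (rep (chi g)) = chi g"
      unfolding rep_def by (rule someI2[of _ g], use g in auto)+
    then have "rep (chi g) \<in> H #> g"
      using sep[OF r(1) g(1)] subgroup.rcos_module_rev[OF H is_group g(1)] by auto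
    then have "C = H #> rep (chi g)" using repr_independence[OF _ g(1) H] g(2) by simp
    then show "C \<in> (\<lambda>s. H #> rep s) ` S" using chi g(1) by auto
  qed
  then show ?thesis using S finite_subset by blast
qed

lemma fin_normal_subgroup: "N \<in> fin_normal G \<Longrightarrow> subgroup N G"
  by (simp add: fin_normal_def normal_imp_subgroup)

lemma fin_normal_normal: "N \<in> fin_normal G \<Longrightarrow> N \<lhd> G"
  by (simp add: fin_normal_def)

lemma fin_normal_Int:
  assumes N: "N \<in> fin_normal G" and M: "M \<in> fin_normal G"
  shows "N \<inter> M \<in> fin_normal G"
proof -
  have sN: "subgroup N G" and sM: "subgroup M G"
    using N M by (simp_all add: fin_normal_subgroup)
  have "finite (rcosets (N \<inter> M))"
  proof (rule finite_rcosets_by_separating_map[where chi = "\<lambda>g. (N #> g, M #> g)"])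
    show "subgroup (N \<inter> M) G" using sN sM subgroups_Inter_pair by blast
    show "finite ((rcosets N) \<times> (rcosets M))" using N M by (simp add: fin_normal_def)
    show "(\<lambda>g. (N #> g, M #> g)) \<in> carrier G \<rightarrow> (rcosets N) \<times> (rcosets M)"
      using rcosetsI sN sM subgroup.subset by blast
    fix g g' assume g: "g \<in> carrier G" "g' \<in> carrier G" "(N #> g, M #> g) = (N #> g', M #> g')"
    then have "g \<in> N #> g'" "g \<in> M #> g'"
      using repr_independenceD[OF sN g(1)] repr_independenceD[OF sM g(1)] by auto
    then show "g \<otimes> inv g' \<in> N \<inter> M"
      using subgroup.rcos_module_imp[OF sN is_group g(2)] subgroup.rcos_module_imp[OF sM is_group g(2)]
      by blast
  qed
  then show ?thesis
    using normal_subgroup_intersect[OF fin_normal_normal[OF N] fin_normal_normal[OF M]]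
    by (simp add: fin_normal_def)
qed

lemma carrier_fin_normal: "carrier G \<in> fin_normal G"
proof -
  have "finite (rcosets (carrier G))"
    by (rule finite_rcosets_by_separating_map[where chi = "\<lambda>_. ()" and S = "{()}"])
      (auto simp: subgroup_self)
  then show ?thesis by (simp add: fin_normal_def normal_invI subgroup_self)
qed

lemma fin_normal_lower_bound:
  assumes "finite F" "F \<subseteq> fin_normal G"
  obtains N where "N \<in> fin_normal G" "\<And>M. M \<in> F \<Longrightarrow> N \<subseteq> M"
  using assms
proof (induction F arbitrary: thesis rule: finite_induct)
  case empty
  then show ?case using carrier_fin_normal by blast
next
  case (insert M F)
  then obtain N where "N \<in> fin_normal G" "\<And>M'. M' \<in> F \<Longrightarrow> N \<subseteq> M'" by blast
  then show ?case using insert.prems fin_normal_Int[of N M] by blast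
qed

end

section \<open>The profinite completion\<close>

definition to_prof_compl :: "('a, 'b) monoid_scheme \<Rightarrow> 'a \<Rightarrow> 'a set \<Rightarrow> 'a set" where
  "to_prof_compl G g = (\<lambda>N\<in>fin_normal G. N #>\<^bsub>G\<^esub> g)"

context group
begin

lemma prof_compl_carrier_iff: "x \<in> carrier (prof_compl G) \<longleftrightarrow> x \<in> extensional (fin_normal G) \<and>
   (\<forall>N\<in>fin_normal G. x N \<in> rcosets N) \<and>
   (\<forall>N\<in>fin_normal G. \<forall>M\<in>fin_normal G. N \<subseteq> M \<longrightarrow> x N \<subseteq> x M)"
  by (simp add: prof_compl_def)

lemma prof_compl_mult: "x \<otimes>\<^bsub>prof_compl G\<^esub> y = (\<lambda>N\<in>fin_normal G. x N <#> y N)"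
  by (simp add: prof_compl_def)

lemma prof_compl_coset:
  assumes "x \<in> carrier (prof_compl G)" "N \<in> fin_normal G"
  obtains g where "g \<in> carrier G" "x N = N #> g"
  using assms by (auto simp: prof_compl_carrier_iff RCOSETS_def)

lemma prof_compl_eq_coarser:
  assumes x: "x \<in> carrier (prof_compl G)" and y: "y \<in> carrier (prof_compl G)"
    and N: "N \<in> fin_normal G" and M: "M \<in> fin_normal G" and "N \<subseteq> M" and "x N = y N"
  shows "x M = y M"
proof -
  obtain g where g: "g \<in> carrier G" "x N = N #> g" using prof_compl_coset[OF x N] .
  have "g \<in> x N" using g rcos_self[OF g(1) fin_normal_subgroup[OF N]] by simp
  moreover have "x N \<subseteq> x M" "y N \<subseteq> y M"
    using x y N M \<open>N \<subseteq> M\<close> by (auto simp: prof_compl_carrier_iff)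
  ultimately have "g \<in> x M" "g \<in> y M" using \<open>x N = y N\<close> by auto
  moreover have "x M \<in> rcosets M" "y M \<in> rcosets M"
    using x y M by (auto simp: prof_compl_carrier_iff)
  ultimately show ?thesis
    using rcos_disjoint[OF fin_normal_subgroup[OF M]] by (auto simp: pairwise_def disjnt_def)
qed

lemma to_prof_compl_carrier:
  assumes g: "g \<in> carrier G"
  shows "to_prof_compl G g \<in> carrier (prof_compl G)"
  using g fin_normal_subgroup
  by (auto simp: prof_compl_carrier_iff to_prof_compl_def intro!: rcosetsI subgroup.subset)
    (auto simp: r_coset_def)

lemma to_prof_compl_hom: "to_prof_compl G \<in> hom G (prof_compl G)"
proof (rule homI)
  fix g h assume "g \<in> carrier G" "h \<in> carrier G"
  then show "to_prof_compl G (g \<otimes> h) = to_prof_compl G g \<otimes>\<^bsub>prof_compl G\<^esub> to_prof_compl G h"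
    by (auto simp: to_prof_compl_def prof_compl_mult normal.rcos_sum fin_normal_normal
        intro!: restrict_ext)
qed (rule to_prof_compl_carrier)

lemma topspace_prof_top: "topspace (prof_top G) = carrier (prof_compl G)"
proof -
  have "carrier (prof_compl G) \<subseteq> (\<Pi>\<^sub>E N\<in>fin_normal G. rcosets N)"
    by (rule subsetI) (simp add: prof_compl_carrier_iff PiE_iff)
  then show ?thesis
    unfolding prof_top_def topspace_subtopology topspace_product_topology topspace_discrete_topology
    by (simp add: Int_absorb1)
qed

lemma continuous_map_prof_top_component:
  assumes "N \<in> fin_normal G"
  shows "continuous_map (prof_top G) (discrete_topology (rcosets N)) (\<lambda>x. x N)"
  unfolding prof_top_def
  by (rule continuous_map_from_subtopology[OF continuous_map_product_projection[OF assms]])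

lemma prof_top_locally_constant:
  assumes f: "continuous_map (prof_top G) (discrete_topology S) f"
    and x: "x \<in> carrier (prof_compl G)"
  obtains N where "N \<in> fin_normal G"
    "\<And>y. y \<in> carrier (prof_compl G) \<Longrightarrow> y N = x N \<Longrightarrow> f y = f x"
proof -
  let ?X = "\<lambda>N. discrete_topology (rcosets N)"
  have "openin (prof_top G) {y \<in> topspace (prof_top G). f y \<in> {f x}}"
    using continuous_map_image_subset_topspace[OF f] x
    by (intro openin_continuous_map_preimage[OF f]) (auto simp: topspace_prof_top)
  then obtain T where T: "openin (product_topology ?X (fin_normal G)) T"
    and fibre: "{y \<in> carrier (prof_compl G). f y = f x} = T \<inter> carrier (prof_compl G)"
    unfolding topspace_prof_top unfolding prof_top_def openin_subtopology by auto
  have "x \<in> T" using fibre x by blast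
  then obtain U where U: "finite {M \<in> fin_normal G. U M \<noteq> rcosets M}"
    "x \<in> Pi\<^sub>E (fin_normal G) U" "Pi\<^sub>E (fin_normal G) U \<subseteq> T"
    using T unfolding openin_product_topology_alt by auto
  obtain N where N: "N \<in> fin_normal G" "\<And>M. M \<in> fin_normal G \<Longrightarrow> U M \<noteq> rcosets M \<Longrightarrow> N \<subseteq> M"
    by (rule fin_normal_lower_bound[OF U(1)]) auto
  show thesis
  proof (rule that[OF N(1)])
    fix y assume y: "y \<in> carrier (prof_compl G)" "y N = x N"
    have "y M \<in> U M" if M: "M \<in> fin_normal G" for M
    proof (cases "U M = rcosets M")
      case True
      then show ?thesis using y M by (simp add: prof_compl_carrier_iff)
    next
      case False
      then have "y M = x M" using prof_compl_eq_coarser[OF y(1) x N(1) M N(2)[OF M] y(2)] by simp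
      then show ?thesis using U(2) M by auto
    qed
    then have "y \<in> Pi\<^sub>E (fin_normal G) U" using y(1) by (simp add: PiE_iff prof_compl_carrier_iff)
    then have "y \<in> T" using U(3) by blast
    then show "f y = f x" using fibre y(1) by blast
  qed
qed

lemma continuous_pair_values_attained_on_image:
  assumes f1: "continuous_map (prof_top G) (discrete_topology S1) f1"
    and f2: "continuous_map (prof_top G) (discrete_topology S2) f2"
    and x: "x \<in> carrier (prof_compl G)"
  obtains g where "g \<in> carrier G"
    "f1 x = f1 (to_prof_compl G g)" "f2 x = f2 (to_prof_compl G g)"
proof -
  obtain N1 where N1: "N1 \<in> fin_normal G"
    "\<And>y. y \<in> carrier (prof_compl G) \<Longrightarrow> y N1 = x N1 \<Longrightarrow> f1 y = f1 x"
    using prof_top_locally_constant[OF f1 x] by blast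
  obtain N2 where N2: "N2 \<in> fin_normal G"
    "\<And>y. y \<in> carrier (prof_compl G) \<Longrightarrow> y N2 = x N2 \<Longrightarrow> f2 y = f2 x"
    using prof_top_locally_constant[OF f2 x] by blast
  have N: "N1 \<inter> N2 \<in> fin_normal G" using fin_normal_Int[OF N1(1) N2(1)] .
  obtain g where g: "g \<in> carrier G" "x (N1 \<inter> N2) = N1 \<inter> N2 #> g"
    using prof_compl_coset[OF x N] .
  have gx: "to_prof_compl G g (N1 \<inter> N2) = x (N1 \<inter> N2)"
    using g N by (simp add: to_prof_compl_def)
  have "to_prof_compl G g N1 = x N1" "to_prof_compl G g N2 = x N2"
    using prof_compl_eq_coarser[OF to_prof_compl_carrier[OF g(1)] x N _ _ gx] N1(1) N2(1) by auto
  then show thesis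
    using that[OF g(1)] N1(2) N2(2) to_prof_compl_carrier[OF g(1)] by metis
qed

end


section \<open>Extending homomorphisms with finite target to the completion\<close>

text \<open>Targets of homomorphisms are arbitrary multiplicative structures (unitri_grp is not known
  to be a group), so the kernel is the fibre over the image of the unit rather than over the unit
  of the target.\<close>

definition one_fibre :: "('a, 'b) monoid_scheme \<Rightarrow> ('a \<Rightarrow> 'c) \<Rightarrow> 'a set" where
  "one_fibre G f = {k \<in> carrier G. f k = f \<one>\<^bsub>G\<^esub>}"

definition prof_ext :: "('a, 'b) monoid_scheme \<Rightarrow> ('a \<Rightarrow> 'c) \<Rightarrow> ('a set \<Rightarrow> 'a set) \<Rightarrow> 'c" where
  "prof_ext G f x = the_elem (f ` x (one_fibre G f))"

context group
begin

lemma one_fibre_absorb: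
  assumes f: "f \<in> hom G F" and k: "k \<in> one_fibre G f" and a: "a \<in> carrier G"
  shows "f (k \<otimes> a) = f a" and "f (a \<otimes> k) = f a"
proof -
  have kc: "k \<in> carrier G" and fk: "f k = f \<one>" using k by (auto simp: one_fibre_def)
  have "f (k \<otimes> a) = f \<one> \<otimes>\<^bsub>F\<^esub> f a" using hom_mult[OF f kc a] fk by simp
  also have "\<dots> = f a" using hom_mult[OF f one_closed a] a by simp
  finally show "f (k \<otimes> a) = f a" .
  have "f (a \<otimes> k) = f a \<otimes>\<^bsub>F\<^esub> f \<one>" using hom_mult[OF f a kc] fk by simp
  also have "\<dots> = f a" using hom_mult[OF f a one_closed] a by simp
  finally show "f (a \<otimes> k) = f a" .
qed

lemma one_fibre_fin_normal:
  assumes f: "f \<in> hom G F" and fin: "finite (carrier F)"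
  shows "one_fibre G f \<in> fin_normal G"
proof -
  let ?K = "one_fibre G f"
  have inv_fibre: "f (a \<otimes> inv b) = f \<one>" if "a \<in> carrier G" "b \<in> carrier G" "f a = f b" for a b
    using that hom_mult[OF f] by (metis inv_closed r_inv)
  have sub: "subgroup ?K G"
  proof (rule subgroupI)
    show "?K \<subseteq> carrier G" "?K \<noteq> {}" by (auto simp: one_fibre_def)
    fix a b assume a: "a \<in> ?K" and b: "b \<in> ?K"
    then show "inv a \<in> ?K" "a \<otimes> b \<in> ?K"
      using inv_fibre[of \<one> a] one_fibre_absorb(1)[OF f a, of b]
      by (auto simp: one_fibre_def)
  qed
  have "?K \<lhd> G"
  proof (rule normal_invI[OF sub])
    fix x k assume x: "x \<in> carrier G" and k: "k \<in> ?K"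
    then have "f (x \<otimes> k) = f x" and "x \<otimes> k \<in> carrier G"
      using one_fibre_absorb(2)[OF f k x] by (auto simp: one_fibre_def)
    then show "x \<otimes> k \<otimes> inv x \<in> ?K"
      using inv_fibre x by (auto simp: one_fibre_def)
  qed
  moreover have "finite (rcosets ?K)"
    using finite_rcosets_by_separating_map[OF sub fin] f inv_fibre
    by (auto simp: hom_def one_fibre_def)
  ultimately show ?thesis by (simp add: fin_normal_def)
qed

lemma image_rcos_one_fibre:
  assumes f: "f \<in> hom G F" and g: "g \<in> carrier G"
  shows "f ` (one_fibre G f #> g) = {f g}"
proof -
  have "f ` (one_fibre G f #> g) = (\<lambda>k. f (k \<otimes> g)) ` one_fibre G f"
    by (auto simp: r_coset_def)
  also have "\<dots> = (\<lambda>k. f g) ` one_fibre G f"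
    using one_fibre_absorb(1)[OF f _ g] by (intro image_cong) auto
  also have "\<dots> = {f g}"
    by (auto simp: one_fibre_def)
  finally show ?thesis .
qed

lemma prof_ext_eq:
  assumes "f \<in> hom G F" "g \<in> carrier G" "x (one_fibre G f) = one_fibre G f #> g"
  shows "prof_ext G f x = f g"
  using assms by (simp add: prof_ext_def image_rcos_one_fibre)

lemma prof_ext_to_prof_compl:
  assumes f: "f \<in> hom G F" "finite (carrier F)" and g: "g \<in> carrier G"
  shows "prof_ext G f (to_prof_compl G g) = f g"
  using prof_ext_eq[OF f(1) g] one_fibre_fin_normal[OF f] by (simp add: to_prof_compl_def)

lemma prof_ext_hom:
  assumes f: "f \<in> hom G F" "finite (carrier F)"
  shows "prof_ext G f \<in> hom (prof_compl G) F"
proof (rule homI)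
  let ?K = "one_fibre G f"
  have K: "?K \<in> fin_normal G" using one_fibre_fin_normal[OF f] .
  fix x assume x: "x \<in> carrier (prof_compl G)"
  obtain a where a: "a \<in> carrier G" "x ?K = ?K #> a" using prof_compl_coset[OF x K] .
  show "prof_ext G f x \<in> carrier F"
    using prof_ext_eq[where x = x, OF f(1) a] hom_in_carrier[OF f(1) a(1)] by simp
  fix y assume y: "y \<in> carrier (prof_compl G)"
  obtain b where b: "b \<in> carrier G" "y ?K = ?K #> b" using prof_compl_coset[OF y K] .
  have "(x \<otimes>\<^bsub>prof_compl G\<^esub> y) ?K = ?K #> (a \<otimes> b)"
    using K a b normal.rcos_sum[OF fin_normal_normal[OF K]] by (simp add: prof_compl_mult)
  then have "prof_ext G f (x \<otimes>\<^bsub>prof_compl G\<^esub> y) = f (a \<otimes> b)"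
    using prof_ext_eq[OF f(1)] a b by simp
  then show "prof_ext G f (x \<otimes>\<^bsub>prof_compl G\<^esub> y) = prof_ext G f x \<otimes>\<^bsub>F\<^esub> prof_ext G f y"
    using prof_ext_eq[where x = x, OF f(1) a] prof_ext_eq[where x = y, OF f(1) b]
      hom_mult[OF f(1) a(1) b(1)] by simp
qed

lemma prof_ext_continuous:
  assumes f: "f \<in> hom G F" "finite (carrier F)"
  shows "continuous_map (prof_top G) (discrete_topology (carrier F)) (prof_ext G f)"
proof -
  let ?K = "one_fibre G f"
  have K: "?K \<in> fin_normal G" using one_fibre_fin_normal[OF f] .
  have "(\<lambda>C. the_elem (f ` C)) \<in> rcosets ?K \<rightarrow> carrier F"
    using image_rcos_one_fibre[OF f(1)] hom_in_carrier[OF f(1)] by (auto simp: RCOSETS_def)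
  then have "continuous_map (discrete_topology (rcosets ?K)) (discrete_topology (carrier F))
      (\<lambda>C. the_elem (f ` C))"
    by simp
  from continuous_map_compose[OF continuous_map_prof_top_component[OF K] this]
  show ?thesis by (simp add: prof_ext_def[abs_def] o_def)
qed

end


section \<open>Lifting problems over the completion\<close>

context group
begin

lemma lifting_from_prof_compl:
  assumes fin1: "finite (carrier F1)"
    and lift: "\<forall>\<phi>\<in>hom (prof_compl G) F1.
      continuous_map (prof_top G) (discrete_topology (carrier F1)) \<phi> \<longrightarrow>
      (\<exists>\<psi>\<in>hom (prof_compl G) F2.
         continuous_map (prof_top G) (discrete_topology (carrier F2)) \<psi> \<and>
         (\<forall>x\<in>carrier (prof_compl G). R (\<phi> x) (\<psi> x)))"
    and \<phi>: "\<phi> \<in> hom G F1"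
  shows "\<exists>\<psi>\<in>hom G F2. \<forall>g\<in>carrier G. R (\<phi> g) (\<psi> g)"
proof -
  obtain \<Psi> where \<Psi>: "\<Psi> \<in> hom (prof_compl G) F2"
    and R: "\<forall>x\<in>carrier (prof_compl G). R (prof_ext G \<phi> x) (\<Psi> x)"
    using lift prof_ext_hom[OF \<phi> fin1] prof_ext_continuous[OF \<phi> fin1] by blast
  have "\<Psi> \<circ> to_prof_compl G \<in> hom G F2"
    using Group.hom_compose[OF to_prof_compl_hom \<Psi>] .
  moreover have "R (\<phi> g) ((\<Psi> \<circ> to_prof_compl G) g)" if g: "g \<in> carrier G" for g
    using R to_prof_compl_carrier[OF g] prof_ext_to_prof_compl[OF \<phi> fin1 g] by force
  ultimately show ?thesis by blast
qed

lemma lifting_to_prof_compl: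
  assumes fin2: "finite (carrier F2)"
    and lift: "\<forall>\<phi>\<in>hom G F1. \<exists>\<psi>\<in>hom G F2. \<forall>g\<in>carrier G. R (\<phi> g) (\<psi> g)"
    and \<phi>: "\<phi> \<in> hom (prof_compl G) F1"
    and \<phi>_cont: "continuous_map (prof_top G) (discrete_topology (carrier F1)) \<phi>"
  shows "\<exists>\<psi>\<in>hom (prof_compl G) F2.
      continuous_map (prof_top G) (discrete_topology (carrier F2)) \<psi> \<and>
      (\<forall>x\<in>carrier (prof_compl G). R (\<phi> x) (\<psi> x))"
proof -
  obtain \<psi> where \<psi>: "\<psi> \<in> hom G F2"
    and R: "\<forall>g\<in>carrier G. R ((\<phi> \<circ> to_prof_compl G) g) (\<psi> g)"
    using lift Group.hom_compose[OF to_prof_compl_hom \<phi>] by blast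
  note \<psi>_cont = prof_ext_continuous[OF \<psi> fin2]
  have "R (\<phi> x) (prof_ext G \<psi> x)" if x: "x \<in> carrier (prof_compl G)" for x
  proof -
    obtain g where g: "g \<in> carrier G" "\<phi> x = \<phi> (to_prof_compl G g)"
      "prof_ext G \<psi> x = prof_ext G \<psi> (to_prof_compl G g)"
      using continuous_pair_values_attained_on_image[OF \<phi>_cont \<psi>_cont x] .
    then show ?thesis using R prof_ext_to_prof_compl[OF \<psi> fin2] by auto
  qed
  then show ?thesis using prof_ext_hom[OF \<psi> fin2] \<psi>_cont by blast
qed

lemma prof_compl_lifting_iff:
  assumes "finite (carrier F1)" and "finite (carrier F2)"
  shows "(\<forall>\<phi>\<in>hom (prof_compl G) F1.
      continuous_map (prof_top G) (discrete_topology (carrier F1)) \<phi> \<longrightarrow>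
      (\<exists>\<psi>\<in>hom (prof_compl G) F2.
         continuous_map (prof_top G) (discrete_topology (carrier F2)) \<psi> \<and>
         (\<forall>x\<in>carrier (prof_compl G). R (\<phi> x) (\<psi> x))))
    \<longleftrightarrow> (\<forall>\<phi>\<in>hom G F1. \<exists>\<psi>\<in>hom G F2. \<forall>g\<in>carrier G. R (\<phi> g) (\<psi> g))"
    (is "?lifts_continuously \<longleftrightarrow> ?lifts")
proof
  assume ?lifts_continuously
  then show ?lifts by (intro ballI) (rule lifting_from_prof_compl[OF assms(1)])
next
  assume ?lifts
  then show ?lifts_continuously by (intro ballI impI) (rule lifting_to_prof_compl[OF assms(2)])
qed

end


lemma finite_bounded_matrices:
  assumes "finite I"
  shows "finite {B :: 'i \<Rightarrow> 'i \<Rightarrow> nat. \<forall>i j. B i j < p \<and> (i \<notin> I \<or> j \<notin> I \<longrightarrow> B i j = 0)}"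
proof -
  define rows where "rows = {r :: 'i \<Rightarrow> nat. \<forall>j. (j \<in> I \<longrightarrow> r j \<in> {..<p}) \<and> (j \<notin> I \<longrightarrow> r j = 0)}"
  have "finite rows" unfolding rows_def using assms by (rule finite_set_of_finite_funs) simp
  then have "finite {B. \<forall>i. (i \<in> I \<longrightarrow> B i \<in> rows) \<and> (i \<notin> I \<longrightarrow> B i = (\<lambda>_. 0))}"
    using assms by (intro finite_set_of_finite_funs)
  then show ?thesis
    by (rule finite_subset[rotated]) (auto simp: rows_def)
qed

lemma finite_unitri_grp: "finite (carrier (unitri_grp p n))"
  by (rule finite_subset[OF _ finite_bounded_matrices[of "{1..n+1}" p]]) (auto simp: unitri_grp_def)

lemma finite_ubar_grp:
  assumes "p > 0"
  shows "finite (carrier (ubar_grp p n))"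
proof -
  have "carrier (ubar_grp p n) \<subseteq>
      Pow {B. \<forall>i j. B i j < p \<and> (i \<notin> {1..n+1} \<or> j \<notin> {1..n+1} \<longrightarrow> B i j = 0)}"
    using assms
    by (auto simp: ubar_grp_def FactGroup_def RCOSETS_def r_coset_def unitri_grp_def)
  then show ?thesis using finite_bounded_matrices finite_subset by blast
qed

theorem mainTheorem5:
  fixes G :: "('g, 'b) monoid_scheme" and p n :: nat
  assumes "Factorial_Ring.prime p" and "n \<ge> 2" and "group G"
  shows "massey_vanishing p n (prof_compl G) (prof_top G) \<longleftrightarrow>
    (\<forall>\<phi>\<in>hom G (ubar_grp p n). \<exists>\<psi>\<in>hom G (unitri_grp p n).
        \<forall>g\<in>carrier G. \<forall>i\<in>{1..n}. \<forall>A\<in>\<phi> g. \<psi> g i (Suc i) = A i (Suc i))"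
proof -
  interpret group G by fact
  have "p > 0" using assms(1) prime_gt_0_nat by blast
  show ?thesis
    unfolding massey_vanishing_def
    by (rule prof_compl_lifting_iff[OF finite_ubar_grp[OF \<open>p > 0\<close>] finite_unitri_grp,
          where R = "\<lambda>B M. \<forall>i\<in>{1..n}. \<forall>A\<in>B. M i (Suc i) = A i (Suc i)"])
qed

end
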